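(* Let $\mathbb{0}=\{x\in\omega^\omega : x(n)=0 \text{ for all but finitely many } n\}$. Then every maximal antichain of $(\omega^\omega\setminus\mathbb{0},\le^* )$ has size $\mathfrak{c}$; i.e. $\mathfrak{mac}(\omega^\omega\setminus\mathbb{0},\le^* )=\mathfrak{c}$.
   Context: For $x,y\in\omega^\omega$, $x\le^* y$ means $x(n)\le y(n)$ for all but finitely many $n$. For a poset (or preorder) $(P,\le)$, an antichain is a subset whose elements are pairwise incomparable (neither $p\le q$ nor $q\le p$ for distinct members), and $\mathfrak{mac}(P)$ is the minimal cardinality of a maximal (with respect to inclusion) antichain of $P$. $\mathfrak{c}=2^{\aleph_0}$. *)

theory Defs
  imports Main "HOL-Library.Equipollence"
begin

definition le_star :: "(nat \<Rightarrow> nat) \<Rightarrow> (nat \<Rightarrow> nat) \<Rightarrow> bool" where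
  "le_star x y \<longleftrightarrow> finite {n. \<not> x n \<le> y n}"

definition eventually_zero :: "(nat \<Rightarrow> nat) set" where
  "eventually_zero = {x. finite {n. x n \<noteq> 0}}"

definition is_antichain :: "'a set \<Rightarrow> ('a \<Rightarrow> 'a \<Rightarrow> bool) \<Rightarrow> 'a set \<Rightarrow> bool" where
  "is_antichain P le A \<longleftrightarrow> A \<subseteq> P \<and>
     (\<forall>x\<in>A. \<forall>y\<in>A. x \<noteq> y \<longrightarrow> \<not> le x y \<and> \<not> le y x)"

definition is_maximal_antichain :: "'a set \<Rightarrow> ('a \<Rightarrow> 'a \<Rightarrow> bool) \<Rightarrow> 'a set \<Rightarrow> bool" where
  "is_maximal_antichain P le A \<longleftrightarrow> is_antichain P le A \<and>
     (\<forall>B. is_antichain P le B \<and> A \<subseteq> B \<longrightarrow> B = A)"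

end

theory Submission
  imports Defs "HOL-Library.Countable"
begin

text \<open>Fix a member a of a maximal antichain A; a is nonzero on an infinite set, which we split
into two disjoint infinite parts carrying almost disjoint families Z X and W X indexed by the
continuum. Raising a by one on Z X and lowering it by one on W X gives functions y X that are
pairwise incomparable and incomparable with a. Each y X is comparable with some member of A,
and no member of A serves two different y X: if b bounded both y X and y Y from above
(below), it would bound a from above (below), because y X and y Y can only both drop below
a (rise above a) on the finite set W X \<inter> W Y (Z X \<inter> Z Y); so b = a, contradicting
incomparability with a.\<close>

subsection \<open>Almost disjoint families of size continuum\<close>

definition branch :: "nat set \<Rightarrow> bool list set" where
  "branch X = range (\<lambda>m. map (\<lambda>i. i \<in> X) [0..<m])"

lemma branch_prefix_eq:
  assumes "map (\<lambda>i. i \<in> X) [0..<m] = map (\<lambda>i. i \<in> Y) [0..<m']"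
  shows "m = m'" and "i < m \<Longrightarrow> i \<in> X \<longleftrightarrow> i \<in> Y"
proof -
  show "m = m'" using arg_cong[OF assms, of length] by simp
  show "i \<in> X \<longleftrightarrow> i \<in> Y" if "i < m"
    using arg_cong[OF assms, of "\<lambda>xs. xs ! i"] that \<open>m = m'\<close> by simp
qed

lemma infinite_branch: "infinite (branch X)"
proof -
  have "inj (\<lambda>m. map (\<lambda>i. i \<in> X) [0..<m])"
    by (rule injI) (rule branch_prefix_eq)
  then show ?thesis
    unfolding branch_def using range_inj_infinite by blast
qed

lemma finite_branch_Int:
  assumes "X \<noteq> Y"
  shows "finite (branch X \<inter> branch Y)"
proof -
  obtain k where k: "\<not> (k \<in> X \<longleftrightarrow> k \<in> Y)" using assms by blast
  have "branch X \<inter> branch Y \<subseteq> (\<lambda>m. map (\<lambda>i. i \<in> X) [0..<m]) ` {..k}"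
  proof
    fix xs assume "xs \<in> branch X \<inter> branch Y"
    then obtain m m' where m: "xs = map (\<lambda>i. i \<in> X) [0..<m]"
      and "xs = map (\<lambda>i. i \<in> Y) [0..<m']"
      unfolding branch_def by blast
    then have "m \<le> k" using branch_prefix_eq(2) k by (metis not_le)
    then show "xs \<in> (\<lambda>m. map (\<lambda>i. i \<in> X) [0..<m]) ` {..k}" using m by blast
  qed
  then show ?thesis by (rule finite_subset) simp
qed

lemma almost_disjoint_family:
  assumes "infinite S"
  obtains F :: "nat set \<Rightarrow> 'a set"
  where "\<And>X. F X \<subseteq> S" "\<And>X. infinite (F X)"
    and "\<And>X Y. X \<noteq> Y \<Longrightarrow> finite (F X \<inter> F Y)"
proof -
  obtain f :: "nat \<Rightarrow> 'a" where "inj f" "range f \<subseteq> S"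
    using infinite_countable_subset assms by blast
  define g :: "bool list \<Rightarrow> 'a" where "g = f \<circ> to_nat"
  have g: "inj g" "range g \<subseteq> S"
    unfolding g_def using \<open>inj f\<close> \<open>range f \<subseteq> S\<close> by (auto intro: inj_compose)
  show ?thesis
  proof
    show "g ` branch X \<subseteq> S" for X using g(2) by blast
    show "infinite (g ` branch X)" for X
      using infinite_branch finite_imageD g(1) inj_on_subset by blast
    show "finite (g ` branch X \<inter> g ` branch Y)" if "X \<noteq> Y" for X Y
      using finite_branch_Int[OF that] image_Int[OF g(1)] by (metis finite_imageI)
  qed
qed

lemma infinite_disjoint_parts:
  assumes "infinite S"
  obtains S\<^sub>1 S\<^sub>2 where "S\<^sub>1 \<subseteq> S" "S\<^sub>2 \<subseteq> S" "S\<^sub>1 \<inter> S\<^sub>2 = {}" "infinite S\<^sub>1" "infinite S\<^sub>2"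
proof -
  obtain f :: "nat \<Rightarrow> 'a" where f: "inj f" "range f \<subseteq> S"
    using infinite_countable_subset assms by blast
  have "inj (\<lambda>n. f (2 * n))" "inj (\<lambda>n. f (2 * n + 1))"
    using f(1) by (auto intro!: injI dest: injD)
  then have "infinite (range (\<lambda>n. f (2 * n)))" "infinite (range (\<lambda>n. f (2 * n + 1)))"
    by (simp_all add: range_inj_infinite)
  moreover have "range (\<lambda>n. f (2 * n)) \<inter> range (\<lambda>n. f (2 * n + 1)) = {}"
    by (auto dest!: injD[OF f(1)]) presburger
  ultimately show ?thesis
    using that[of "range (\<lambda>n. f (2 * n))" "range (\<lambda>n. f (2 * n + 1))"] f(2) by blast
qed

definition fan :: "('a \<Rightarrow> 'a \<Rightarrow> bool) \<Rightarrow> 'a \<Rightarrow> ('i \<Rightarrow> 'a) \<Rightarrow> bool" where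
  "fan le a y \<longleftrightarrow>
     (\<forall>i j. i \<noteq> j \<longrightarrow> \<not> le (y i) (y j)) \<and> (\<forall>i. \<not> le (y i) a \<and> \<not> le a (y i)) \<and>
     (\<forall>i j b. i \<noteq> j \<and> le (y i) b \<and> le (y j) b \<longrightarrow> le a b) \<and>
     (\<forall>i j b. i \<noteq> j \<and> le b (y i) \<and> le b (y j) \<longrightarrow> le b a)"

lemma maximal_antichain_comparable:
  assumes "is_maximal_antichain P le A" and "reflp le" and "y \<in> P"
  obtains b where "b \<in> A" and "le y b \<or> le b y"
proof (cases "y \<in> A")
  case True
  then show ?thesis using that reflpD[OF assms(2)] by blast
next
  case False
  then have "\<not> is_antichain P le (insert y A)"
    using assms(1) unfolding is_maximal_antichain_def by blast
  then show ?thesis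
    using that assms(1,3) unfolding is_maximal_antichain_def is_antichain_def by blast
qed

lemma lepoll_maximal_antichain:
  fixes y :: "'i \<Rightarrow> 'a"
  assumes max: "is_maximal_antichain P le A"
    and refl: "reflp le" and trans: "transp le"
    and a: "a \<in> A" and y: "range y \<subseteq> P" and "fan le a y"
  shows "(UNIV :: 'i set) \<lesssim> A"
proof -
  have incomparable: "\<And>i j. i \<noteq> j \<Longrightarrow> \<not> le (y i) (y j)"
    and not_below: "\<And>i. \<not> le (y i) a" and not_above: "\<And>i. \<not> le a (y i)"
    and upper: "\<And>i j b. i \<noteq> j \<Longrightarrow> le (y i) b \<Longrightarrow> le (y j) b \<Longrightarrow> le a b"
    and lower: "\<And>i j b. i \<noteq> j \<Longrightarrow> le b (y i) \<Longrightarrow> le b (y j) \<Longrightarrow> le b a"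
    using \<open>fan le a y\<close> unfolding fan_def by blast+
  have "\<forall>i. \<exists>b. b \<in> A \<and> (le (y i) b \<or> le b (y i))"
    using maximal_antichain_comparable[OF max refl] y by (metis rangeI subsetD)
  then obtain c where c: "\<And>i. c i \<in> A" "\<And>i. le (y i) (c i) \<or> le (c i) (y i)"
    by metis
  have eq_a: "b = a" if "b \<in> A" "le a b \<or> le b a" for b
    using max a that unfolding is_maximal_antichain_def is_antichain_def by blast
  have "inj c"
  proof (rule injI, rule ccontr)
    fix i j assume same: "c i = c j" and "i \<noteq> j"
    consider "le (y i) (c i)" "le (y j) (c i)" | "le (c i) (y i)" "le (c i) (y j)"
      | "le (y i) (c i)" "le (c i) (y j)" | "le (c i) (y i)" "le (y j) (c i)"
      using c(2)[of i] c(2)[of j] same by metis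
    then show False
    proof cases
      case 1
      then have "c i = a" using upper[OF \<open>i \<noteq> j\<close>] eq_a c(1) by blast
      then show False using 1 not_below by metis
    next
      case 2
      then have "c i = a" using lower[OF \<open>i \<noteq> j\<close>] eq_a c(1) by blast
      then show False using 2 not_above by metis
    next
      case 3
      then show False using incomparable[OF \<open>i \<noteq> j\<close>] transpD[OF trans] by blast
    next
      case 4
      then show False using incomparable \<open>i \<noteq> j\<close> transpD[OF trans] by metis
    qed
  qed
  then show ?thesis unfolding lepoll_def using c(1) by blast
qed

subsection \<open>Perturbations under eventual domination\<close>

lemma reflp_le_star: "reflp le_star"
  by (rule reflpI) (simp add: le_star_def)

lemma transp_le_star: "transp le_star"
proof (rule transpI)
  fix x y z assume "le_star x y" "le_star y z"
  moreover have "{n. \<not> x n \<le> z n} \<subseteq> {n. \<not> x n \<le> y n} \<union> {n. \<not> y n \<le> z n}"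
    by auto
  ultimately show "le_star x z"
    unfolding le_star_def by (meson finite_Un finite_subset)
qed

text \<open>Lowering on W is only effective where a is positive, because of truncated subtraction;
the sets W used below lie in the support of a.\<close>

definition bump :: "(nat \<Rightarrow> nat) \<Rightarrow> nat set \<Rightarrow> nat set \<Rightarrow> nat \<Rightarrow> nat" where
  "bump a Z W n = (if n \<in> Z then a n + 1 else if n \<in> W then a n - 1 else a n)"

lemma le_bump: "n \<notin> W \<Longrightarrow> a n \<le> bump a Z W n"
  unfolding bump_def by simp

lemma bump_le: "n \<notin> Z \<Longrightarrow> bump a Z W n \<le> a n"
  unfolding bump_def by simp

lemma bump_not_eventually_zero:
  assumes "infinite Z"
  shows "bump a Z W \<notin> eventually_zero"
proof -
  have "Z \<subseteq> {n. bump a Z W n \<noteq> 0}" by (simp add: bump_def subset_eq)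
  then show ?thesis
    unfolding eventually_zero_def using assms finite_subset by blast
qed

lemma not_le_star_bump:
  assumes "Z\<^sub>1 \<inter> W\<^sub>2 = {}" and "infinite (Z\<^sub>1 - Z\<^sub>2)"
  shows "\<not> le_star (bump a Z\<^sub>1 W\<^sub>1) (bump a Z\<^sub>2 W\<^sub>2)"
proof -
  have "Z\<^sub>1 - Z\<^sub>2 \<subseteq> {n. \<not> bump a Z\<^sub>1 W\<^sub>1 n \<le> bump a Z\<^sub>2 W\<^sub>2 n}"
    using assms(1) by (auto simp: bump_def)
  then show ?thesis
    unfolding le_star_def using assms(2) finite_subset by blast
qed

lemma not_le_star_bump_self:
  assumes "infinite Z"
  shows "\<not> le_star (bump a Z W) a"
proof -
  have "bump a {} {} = a" by (rule ext) (simp add: bump_def)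
  then show ?thesis using not_le_star_bump[of Z "{}" "{}" a W] assms by simp
qed

lemma not_le_star_self_bump:
  assumes "infinite (W - Z)" and "W \<subseteq> {n. a n \<noteq> 0}"
  shows "\<not> le_star a (bump a Z W)"
proof -
  have "W - Z \<subseteq> {n. \<not> a n \<le> bump a Z W n}"
    using assms(2) by (auto simp: bump_def)
  then show ?thesis
    unfolding le_star_def using assms(1) finite_subset by blast
qed

lemma le_star_bump_upper_bound:
  assumes "le_star (bump a Z\<^sub>1 W\<^sub>1) b" "le_star (bump a Z\<^sub>2 W\<^sub>2) b" "finite (W\<^sub>1 \<inter> W\<^sub>2)"
  shows "le_star a b"
proof -
  have "a n \<le> b n"
    if "n \<notin> W\<^sub>1 \<inter> W\<^sub>2" "bump a Z\<^sub>1 W\<^sub>1 n \<le> b n" "bump a Z\<^sub>2 W\<^sub>2 n \<le> b n" for n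
    using that le_bump order_trans by (metis IntI)
  then have "{n. \<not> a n \<le> b n} \<subseteq>
      {n. \<not> bump a Z\<^sub>1 W\<^sub>1 n \<le> b n} \<union> {n. \<not> bump a Z\<^sub>2 W\<^sub>2 n \<le> b n} \<union> (W\<^sub>1 \<inter> W\<^sub>2)"
    by blast
  then show ?thesis
    using assms unfolding le_star_def by (meson finite_Un finite_subset)
qed

lemma le_star_bump_lower_bound:
  assumes "le_star b (bump a Z\<^sub>1 W\<^sub>1)" "le_star b (bump a Z\<^sub>2 W\<^sub>2)" "finite (Z\<^sub>1 \<inter> Z\<^sub>2)"
  shows "le_star b a"
proof -
  have "b n \<le> a n"
    if "n \<notin> Z\<^sub>1 \<inter> Z\<^sub>2" "b n \<le> bump a Z\<^sub>1 W\<^sub>1 n" "b n \<le> bump a Z\<^sub>2 W\<^sub>2 n" for n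
    using that bump_le order_trans by (metis IntI)
  then have "{n. \<not> b n \<le> a n} \<subseteq>
      {n. \<not> b n \<le> bump a Z\<^sub>1 W\<^sub>1 n} \<union> {n. \<not> b n \<le> bump a Z\<^sub>2 W\<^sub>2 n} \<union> (Z\<^sub>1 \<inter> Z\<^sub>2)"
    by blast
  then show ?thesis
    using assms unfolding le_star_def by (meson finite_Un finite_subset)
qed

lemma le_star_bump_fan:
  assumes "infinite {n. a n \<noteq> 0}"
  obtains y :: "nat set \<Rightarrow> nat \<Rightarrow> nat"
  where "range y \<subseteq> UNIV - eventually_zero" and "fan le_star a y"
proof -
  obtain S\<^sub>1 S\<^sub>2 where S: "S\<^sub>1 \<inter> S\<^sub>2 = {}" "S\<^sub>2 \<subseteq> {n. a n \<noteq> 0}" "infinite S\<^sub>1" "infinite S\<^sub>2"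
    using infinite_disjoint_parts[OF assms] by metis
  obtain Z :: "nat set \<Rightarrow> nat set" where Z: "\<And>X. Z X \<subseteq> S\<^sub>1" "\<And>X. infinite (Z X)"
    "\<And>X Y. X \<noteq> Y \<Longrightarrow> finite (Z X \<inter> Z Y)"
    using almost_disjoint_family[OF S(3)] by metis
  obtain W :: "nat set \<Rightarrow> nat set" where W: "\<And>X. W X \<subseteq> S\<^sub>2" "\<And>X. infinite (W X)"
    "\<And>X Y. X \<noteq> Y \<Longrightarrow> finite (W X \<inter> W Y)"
    using almost_disjoint_family[OF S(4)] by metis
  have ZW: "Z X \<inter> W Y = {}" for X Y
    using Z(1) W(1) S(1) by blast
  let ?y = "\<lambda>X. bump a (Z X) (W X)"
  have "\<forall>X Y. X \<noteq> Y \<longrightarrow> \<not> le_star (?y X) (?y Y)"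
  proof (intro allI impI)
    fix X Y :: "nat set" assume "X \<noteq> Y"
    have "Z X - Z Y = Z X - (Z X \<inter> Z Y)" by blast
    then have "infinite (Z X - Z Y)"
      using Diff_infinite_finite[OF Z(3)[OF \<open>X \<noteq> Y\<close>] Z(2)] by simp
    then show "\<not> le_star (?y X) (?y Y)" by (rule not_le_star_bump[OF ZW])
  qed
  moreover have "\<forall>X. \<not> le_star (?y X) a \<and> \<not> le_star a (?y X)"
  proof
    fix X
    have "W X - Z X = W X" using ZW by blast
    then have "infinite (W X - Z X)" using W(2) by simp
    moreover have "W X \<subseteq> {n. a n \<noteq> 0}" using W(1) S(2) by blast
    ultimately show "\<not> le_star (?y X) a \<and> \<not> le_star a (?y X)"
      using not_le_star_bump_self[OF Z(2)] not_le_star_self_bump by blast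
  qed
  moreover have "\<forall>X Y b. X \<noteq> Y \<and> le_star (?y X) b \<and> le_star (?y Y) b \<longrightarrow> le_star a b"
    using le_star_bump_upper_bound W(3) by blast
  moreover have "\<forall>X Y b. X \<noteq> Y \<and> le_star b (?y X) \<and> le_star b (?y Y) \<longrightarrow> le_star b a"
    using le_star_bump_lower_bound Z(3) by blast
  ultimately have "fan le_star a ?y"
    unfolding fan_def by (intro conjI)
  moreover have "range ?y \<subseteq> UNIV - eventually_zero"
    using bump_not_eventually_zero[OF Z(2)] by blast
  ultimately show ?thesis by (rule that[rotated])
qed

lemma lepoll_nat_funs_Pow_nat: "(UNIV :: (nat \<Rightarrow> nat) set) \<lesssim> (UNIV :: nat set set)"
proof -
  have "inj (\<lambda>f. range (\<lambda>n. prod_encode (n, f n)))"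
  proof (rule injI, rule ext)
    fix f g :: "nat \<Rightarrow> nat" and n
    assume "range (\<lambda>n. prod_encode (n, f n)) = range (\<lambda>n. prod_encode (n, g n))"
    then obtain m where "prod_encode (n, f n) = prod_encode (m, g m)" by blast
    then show "f n = g n" using inj_prod_encode by (auto dest: injD)
  qed
  then show ?thesis unfolding lepoll_def by blast
qed

theorem mainTheorem3:
  assumes "is_maximal_antichain (UNIV - eventually_zero) le_star A"
  shows "A \<approx> (UNIV :: nat set set)"
proof (rule lepoll_antisym)
  have "A \<lesssim> (UNIV :: (nat \<Rightarrow> nat) set)" by (simp add: subset_imp_lepoll)
  then show "A \<lesssim> (UNIV :: nat set set)" using lepoll_nat_funs_Pow_nat lepoll_trans by blast
  have "(\<lambda>n. 1) \<in> UNIV - eventually_zero" unfolding eventually_zero_def by simp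
  then obtain a where a: "a \<in> A"
    using maximal_antichain_comparable[OF assms reflp_le_star] by blast
  then have "infinite {n. a n \<noteq> 0}"
    using assms unfolding is_maximal_antichain_def is_antichain_def eventually_zero_def by blast
  then obtain y :: "nat set \<Rightarrow> nat \<Rightarrow> nat"
    where "range y \<subseteq> UNIV - eventually_zero" and "fan le_star a y"
    by (rule le_star_bump_fan)
  then show "(UNIV :: nat set set) \<lesssim> A"
    by (rule lepoll_maximal_antichain[OF assms reflp_le_star transp_le_star a])
qed

end
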